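(* There exist absolute constants $\kappa_D>0$ and $C>0$ such that, for diffusive deposition, every configuration $\sigma\in\mathbb N^N$ with $|\sigma|<N/2$ and every $i\in G_N$, $$P\big(\text{explorer attaches to pile } i\,\big|\,\sigma\big)\ge\kappa_D\frac{\sigma_i^2+1}{N}\exp\Big(-\frac3N\Big(\sum_{j=1}^N\sigma_j(\sigma_j+1)\Big)\Big(1+C\frac{|\sigma|}{N}\Big)\Big).$$
   Context: Diffusive deposition: for $N\ge2$, $G_N=\{1,\dots,N\}$, a configuration $\sigma\in\mathbb N^N$ gives column (pile) heights, $|\sigma|=\sum_i\sigma_i$. Given $\sigma$, an explorer is a walk $(X_n,Z_n)_{n\ge0}$ with $(X_n)$ i.i.d. uniform on $G_N$, $Z_0=\max_i\sigma_i+1$, and $(Z_{n+1}-Z_n)$ i.i.d. uniform on $\{-1,1\}$ independent of $(X_n)$. With $n^*=\inf\{n:Z_n\le\sigma_{X_n}\}$, the explorer attaches to pile $X_{n^*}$ (whose height then increases by one). *)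

theory Defs
  imports "HOL-Probability.Probability"
begin

text \<open>Piles are indexed by G_N = {1..N}; a configuration is sigma :: nat => nat,
  only its values on {1..N} matter. The explorer's randomness is an i.i.d. sequence
  of pairs (X_n, xi_n), X_n uniform on {1..N}, xi_n uniform on {-1,1}, independent.\<close>

definition explorer_space :: "nat \<Rightarrow> (nat \<times> int) stream measure" where
  "explorer_space N =
     stream_space (measure_pmf (pair_pmf (pmf_of_set {1..N}) (pmf_of_set {-1, 1::int})))"

definition explorer_X :: "(nat \<times> int) stream \<Rightarrow> nat \<Rightarrow> nat" where
  "explorer_X \<omega> n = fst (\<omega> !! n)"

definition explorer_Z :: "nat \<Rightarrow> (nat \<Rightarrow> nat) \<Rightarrow> (nat \<times> int) stream \<Rightarrow> nat \<Rightarrow> int" where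
  "explorer_Z N \<sigma> \<omega> n = int (Max (\<sigma> ` {1..N})) + 1 + (\<Sum>k<n. snd (\<omega> !! k))"

definition attach_event :: "nat \<Rightarrow> (nat \<Rightarrow> nat) \<Rightarrow> nat \<Rightarrow> (nat \<times> int) stream set" where
  "attach_event N \<sigma> i =
     {\<omega> \<in> space (explorer_space N). \<exists>n.
        (\<forall>m<n. explorer_Z N \<sigma> \<omega> m > int (\<sigma> (explorer_X \<omega> m))) \<and>
        explorer_Z N \<sigma> \<omega> n \<le> int (\<sigma> (explorer_X \<omega> n)) \<and>
        explorer_X \<omega> n = i}"

definition attach_prob :: "nat \<Rightarrow> (nat \<Rightarrow> nat) \<Rightarrow> nat \<Rightarrow> real" where
  "attach_prob N \<sigma> i = measure (explorer_space N) (attach_event N \<sigma> i)"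

end

theory Submission
  imports Defs
begin

text \<open>Let \<open>u z\<close> be the probability that an explorer released at height \<open>z\<close> attaches to pile \<open>i\<close>.
  Conditioning on the first step gives \<open>u z = [z \<le> \<sigma> i] / N + a z * (u (z + 1) + u (z - 1)) / 2\<close>,
  where \<open>a z\<close> is the fraction of piles lower than \<open>z\<close>. Above the highest pile, of height \<open>M\<close>,
  \<open>u\<close> is bounded and harmonic, hence constant, so \<open>f k = u k\<close> solves a boundary problem on
  \<open>{0..M+1}\<close> with \<open>f (M + 1) = f M\<close>. Eliminating the unknowns from the top down gives
  \<open>f k \<ge> \<lambda> k * f (k - 1) + \<mu> k\<close> with \<open>\<lambda> k \<ge> \<Prod>w\<in>{k..M}. a w ^ 2\<close>; chaining these inequalities yields
  \<open>f (M + 1) \<ge> (\<Prod>w\<in>{1..M}. a w ^ (2 * w)) ^ 2 * (\<sigma> i ^ 2 + \<sigma> i + 1) / N\<close>.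
  Finally \<open>a w = 1 - p w\<close>, where \<open>p w \<le> q = |\<sigma>| / N < 1/2\<close> is the fraction of piles of height \<open>\<ge> w\<close>,
  \<open>ln (1 - p) \<ge> - p - 2 p\<^sup>2 \<ge> - (1 + 2 q) p\<close>, and \<open>\<Sum>w. w * p w = \<Sum>j. \<sigma> j (\<sigma> j + 1) / (2 N)\<close>.
  This proves the claim with \<open>\<kappa>\<^sub>D = 1\<close> and \<open>C = 2\<close>.\<close>

lemma sum_triangle:
  fixes c :: "nat \<Rightarrow> 'a::comm_semiring_1"
  shows "(\<Sum>k\<in>{1..Suc M}. \<Sum>w\<in>{k..M}. c w) = (\<Sum>w\<in>{1..M}. of_nat w * c w)"
proof (induction M)
  case (Suc M)
  have "(\<Sum>k\<in>{1..Suc (Suc M)}. \<Sum>w\<in>{k..Suc M}. c w)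
      = (\<Sum>k\<in>{1..Suc M}. (\<Sum>w\<in>{k..M}. c w) + c (Suc M))"
    by (simp add: sum.cl_ivl_Suc[of _ 1 "Suc M"])
  then show ?case using Suc by (simp add: sum.distrib sum.cl_ivl_Suc algebra_simps)
qed simp

lemma prod_triangle:
  fixes c :: "nat \<Rightarrow> 'a::comm_monoid_mult"
  shows "(\<Prod>k\<in>{1..Suc M}. \<Prod>w\<in>{k..M}. c w) = (\<Prod>w\<in>{1..M}. c w ^ w)"
proof (induction M)
  case (Suc M)
  have "(\<Prod>k\<in>{1..Suc (Suc M)}. \<Prod>w\<in>{k..Suc M}. c w)
      = (\<Prod>k\<in>{1..Suc M}. (\<Prod>w\<in>{k..M}. c w) * c (Suc M))"
    by (simp add: prod.cl_ivl_Suc[of _ 1 "Suc M"])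
  then show ?case using Suc by (simp add: prod.distrib prod.cl_ivl_Suc algebra_simps)
qed simp

lemma one_le_two_minus_mult:
  fixes a x :: real
  assumes "0 < a" "a \<le> 1" "0 \<le> x" "x \<le> 1"
  shows "1 \<le> 2 - a * x"
  using mult_le_one[of a x] assms by linarith

text \<open>\<open>elim_ratio M a k\<close> and \<open>elim_offset M a b k\<close> are the coefficients \<open>\<lambda> k\<close> and \<open>\<mu> k\<close> of the
  top-down elimination for the boundary problem \<open>f k = b k + a k * (f (k + 1) + f (k - 1)) / 2\<close>
  (\<open>1 \<le> k \<le> M\<close>), \<open>f (M + 1) = f M\<close>.\<close>

function elim_ratio :: "nat \<Rightarrow> (nat \<Rightarrow> real) \<Rightarrow> nat \<Rightarrow> real" where
  "elim_ratio M a k = (if M < k then 1 else a k / (2 - a k * elim_ratio M a (Suc k)))"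
  by auto
termination by (relation "Wellfounded.measure (\<lambda>(M, a, k). Suc M - k)") auto

function elim_offset :: "nat \<Rightarrow> (nat \<Rightarrow> real) \<Rightarrow> (nat \<Rightarrow> real) \<Rightarrow> nat \<Rightarrow> real" where
  "elim_offset M a b k =
     (if M < k then 0
      else (2 * b k + a k * elim_offset M a b (Suc k)) / (2 - a k * elim_ratio M a (Suc k)))"
  by auto
termination by (relation "Wellfounded.measure (\<lambda>(M, a, b, k). Suc M - k)") auto

declare elim_ratio.simps [simp del] elim_offset.simps [simp del]

definition elim_gain :: "nat \<Rightarrow> (nat \<Rightarrow> real) \<Rightarrow> nat \<Rightarrow> real" where
  "elim_gain M a k = (\<Prod>u\<in>{k..Suc M}. elim_ratio M a u)"

context
  fixes M :: nat and a :: "nat \<Rightarrow> real"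
  assumes a: "\<And>k. 0 < a k \<and> a k \<le> 1"
begin

lemma elim_ratio_bounds: "0 \<le> elim_ratio M a k \<and> elim_ratio M a k \<le> 1"
proof (induction "Suc M - k" arbitrary: k)
  case 0
  then show ?case by (simp add: elim_ratio.simps)
next
  case (Suc n)
  define x where "x = elim_ratio M a (Suc k)"
  have "n = Suc M - Suc k" using Suc.hyps(2) by simp
  then have x: "0 \<le> x" "x \<le> 1" using Suc.hyps(1) x_def by blast+
  have ak: "0 < a k" "a k \<le> 1" using a by auto
  have pos: "1 \<le> 2 - a k * x" using one_le_two_minus_mult ak x .
  have "a k / (2 - a k * x) \<le> 1" using pos ak by (simp add: divide_le_eq_1)
  moreover have "0 \<le> a k / (2 - a k * x)" using pos ak by simp
  ultimately show ?case using Suc by (simp add: elim_ratio.simps[of M a k] x_def)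
qed

lemma elim_ratio_ge: "k \<le> M \<Longrightarrow> a k ^ 2 * elim_ratio M a (Suc k) \<le> elim_ratio M a k"
proof -
  assume k: "k \<le> M"
  define x where "x = elim_ratio M a (Suc k)"
  have x: "0 \<le> x" "x \<le> 1" using elim_ratio_bounds x_def by auto
  have ak: "0 < a k" "a k \<le> 1" using a by auto
  have pos: "1 \<le> 2 - a k * x" using one_le_two_minus_mult ak x .
  have "a k - a k ^ 2 * x * (2 - a k * x) = a k * (1 - a k * x) ^ 2"
    by (simp add: power2_eq_square algebra_simps)
  then have "a k ^ 2 * x * (2 - a k * x) \<le> a k" using ak
    by (metis diff_ge_0_iff_ge less_eq_real_def zero_le_mult_iff zero_le_power2)
  then have "a k ^ 2 * x \<le> a k / (2 - a k * x)" using pos by (simp add: le_divide_eq)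
  then show ?thesis using k by (simp add: elim_ratio.simps[of M a k] x_def)
qed

lemma elim_ratio_ge_prod: "k \<le> Suc M \<Longrightarrow> (\<Prod>w\<in>{k..M}. a w ^ 2) \<le> elim_ratio M a k"
proof (induction k rule: inc_induct)
  case base
  then show ?case by (simp add: elim_ratio.simps)
next
  case (step n)
  then have "(\<Prod>w\<in>{n..M}. a w ^ 2) = a n ^ 2 * (\<Prod>w\<in>{Suc n..M}. a w ^ 2)"
    by (intro prod.atLeast_Suc_atMost) simp
  also have "\<dots> \<le> a n ^ 2 * elim_ratio M a (Suc n)" using step by (simp add: mult_left_mono)
  also have "\<dots> \<le> elim_ratio M a n" using step by (intro elim_ratio_ge) simp
  finally show ?case .
qed

lemma elim_gain_bounds: "0 \<le> elim_gain M a k \<and> elim_gain M a k \<le> 1"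
  unfolding elim_gain_def using elim_ratio_bounds by (intro conjI prod_nonneg prod_le_1) auto

lemma elim_gain_Suc: "k \<le> Suc M \<Longrightarrow> elim_gain M a k = elim_ratio M a k * elim_gain M a (Suc k)"
  unfolding elim_gain_def by (rule prod.atLeast_Suc_atMost)

lemma elim_gain_mono: "k \<le> z \<Longrightarrow> elim_gain M a k \<le> elim_gain M a z"
proof -
  assume "k \<le> z"
  then have "elim_gain M a k = (\<Prod>u\<in>{k..Suc M} - {z..Suc M}. elim_ratio M a u) * elim_gain M a z"
    unfolding elim_gain_def by (intro prod.subset_diff) auto
  moreover have "(\<Prod>u\<in>{k..Suc M} - {z..Suc M}. elim_ratio M a u) \<le> 1"
    using elim_ratio_bounds by (intro prod_le_1) auto
  moreover have "0 \<le> (\<Prod>u\<in>{k..Suc M} - {z..Suc M}. elim_ratio M a u)"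
    using elim_ratio_bounds by (intro prod_nonneg) auto
  ultimately show ?thesis using elim_gain_bounds[of z] by (simp add: mult_left_le_one_le)
qed

lemma elim_gain_ge_prod: "(\<Prod>k\<in>{1..Suc M}. \<Prod>w\<in>{k..M}. a w ^ 2) \<le> elim_gain M a 1"
  unfolding elim_gain_def using a
  by (intro prod_mono conjI prod_nonneg elim_ratio_ge_prod) auto

context
  fixes b :: "nat \<Rightarrow> real"
  assumes b: "\<And>k. 0 \<le> b k"
begin

lemma elim_offset_nonneg: "0 \<le> elim_offset M a b k"
proof (induction "Suc M - k" arbitrary: k)
  case 0
  then show ?case by (simp add: elim_offset.simps)
next
  case (Suc n)
  define x where "x = elim_ratio M a (Suc k)"
  have x: "0 \<le> x" "x \<le> 1" using elim_ratio_bounds x_def by auto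
  have ak: "0 < a k" "a k \<le> 1" using a by auto
  have pos: "1 \<le> 2 - a k * x" using one_le_two_minus_mult ak x .
  have "n = Suc M - Suc k" using Suc.hyps(2) by simp
  then have "0 \<le> elim_offset M a b (Suc k)" using Suc.hyps(1) by blast
  then have "0 \<le> (2 * b k + a k * elim_offset M a b (Suc k)) / (2 - a k * x)"
    using pos ak b[of k] by simp
  then show ?case using Suc by (simp add: elim_offset.simps[of M a b k] x_def)
qed

lemma elim_offset_ge:
  "k \<le> M \<Longrightarrow> elim_ratio M a k * (elim_offset M a b (Suc k) + 2 * b k) \<le> elim_offset M a b k"
proof -
  assume k: "k \<le> M"
  define x where "x = elim_ratio M a (Suc k)"
  define y where "y = elim_offset M a b (Suc k)"
  have x: "0 \<le> x" "x \<le> 1" using elim_ratio_bounds x_def by auto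
  have ak: "0 < a k" "a k \<le> 1" using a by auto
  have pos: "1 \<le> 2 - a k * x" using one_le_two_minus_mult ak x .
  have "a k * (y + 2 * b k) \<le> 2 * b k + a k * y"
    using ak b[of k] by (simp add: algebra_simps mult_left_le_one_le)
  then have "a k / (2 - a k * x) * (y + 2 * b k) \<le> (2 * b k + a k * y) / (2 - a k * x)"
    using pos by (simp add: divide_right_mono)
  then show ?thesis using k by (simp add: elim_offset.simps[of M a b k] elim_ratio.simps[of M a k] x_def y_def)
qed

lemma elim_offset_ge_sum:
  "z \<le> Suc M \<Longrightarrow> elim_gain M a z * (2 * (\<Sum>w\<in>{z..M}. b w)) \<le> elim_offset M a b z"
proof (induction z rule: inc_induct)
  case base
  then show ?case by (simp add: elim_offset.simps)
next
  case (step n)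
  define S where "S = (\<Sum>w\<in>{Suc n..M}. b w)"
  have n: "n \<le> M" using step by simp
  have G: "0 \<le> elim_gain M a (Suc n)" "elim_gain M a (Suc n) \<le> 1" using elim_gain_bounds by auto
  have "elim_gain M a (Suc n) * (2 * b n) \<le> 2 * b n" using G b[of n] by (simp add: mult_left_le_one_le)
  then have "elim_gain M a (Suc n) * (2 * S + 2 * b n) \<le> elim_offset M a b (Suc n) + 2 * b n"
    using step S_def by (simp add: algebra_simps)
  then have "elim_ratio M a n * (elim_gain M a (Suc n) * (2 * S + 2 * b n)) \<le> elim_offset M a b n"
    using elim_offset_ge[OF n] elim_ratio_bounds[of n] by (meson mult_left_mono order.trans)
  moreover have "(\<Sum>w\<in>{n..M}. b w) = b n + S" unfolding S_def using n by (simp add: sum.atLeast_Suc_atMost)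
  ultimately show ?case using elim_gain_Suc[of n] n by (simp add: algebra_simps)
qed

context
  fixes f :: "nat \<Rightarrow> real"
  assumes f_nonneg: "\<And>k. 0 \<le> f k"
    and f_top: "f (Suc M) = f M"
    and f_rec: "\<And>k. 1 \<le> k \<Longrightarrow> k \<le> M \<Longrightarrow> f k = b k + a k * (f (Suc k) + f (k - 1)) / 2"
begin

lemma boundary_problem_elim_step:
  assumes "1 \<le> k" "k \<le> Suc M"
  shows "elim_ratio M a k * f (k - 1) + elim_offset M a b k \<le> f k"
  using assms(2,1)
proof (induction k rule: inc_induct)
  case base
  then show ?case using f_top by (simp add: elim_ratio.simps elim_offset.simps)
next
  case (step k)
  define x where "x = elim_ratio M a (Suc k)"
  define y where "y = elim_offset M a b (Suc k)"
  have x: "0 \<le> x" "x \<le> 1" using elim_ratio_bounds x_def by auto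
  have ak: "0 < a k" "a k \<le> 1" using a by auto
  have pos: "1 \<le> 2 - a k * x" using one_le_two_minus_mult ak x .
  have k: "k \<le> M" using step by simp
  have "x * f k + y \<le> f (Suc k)" using step x_def y_def by simp
  then have "b k + a k * (x * f k + y + f (k - 1)) / 2 \<le> f k"
    using f_rec[OF step.prems k] ak by (smt (verit, best) divide_right_mono mult_left_mono)
  then have "2 * b k + a k * y + a k * f (k - 1) \<le> (2 - a k * x) * f k"
    by (simp add: algebra_simps field_simps)
  then have "(2 * b k + a k * y + a k * f (k - 1)) / (2 - a k * x) \<le> f k"
    using pos by (simp add: divide_le_eq mult.commute)
  moreover have "(2 * b k + a k * y + a k * f (k - 1)) / (2 - a k * x)
     = a k / (2 - a k * x) * f (k - 1) + (2 * b k + a k * y) / (2 - a k * x)"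
    by (simp add: add_divide_distrib algebra_simps)
  ultimately show ?case
    using k by (simp add: elim_offset.simps[of M a b k] elim_ratio.simps[of M a k] x_def y_def)
qed

lemma boundary_problem_elim_chain:
  "k \<le> Suc M \<Longrightarrow>
     elim_gain M a (Suc k) * f k + (\<Sum>z\<in>{Suc k..Suc M}. elim_gain M a (Suc z) * elim_offset M a b z)
       \<le> f (Suc M)"
proof (induction k rule: inc_induct)
  case base
  then show ?case by (simp add: elim_gain_def)
next
  case (step n)
  have "elim_gain M a (Suc (Suc n)) * (elim_ratio M a (Suc n) * f n + elim_offset M a b (Suc n))
          \<le> elim_gain M a (Suc (Suc n)) * f (Suc n)"
    using boundary_problem_elim_step[of "Suc n"] step elim_gain_bounds by (simp add: mult_left_mono)
  moreover have "elim_gain M a (Suc n) = elim_ratio M a (Suc n) * elim_gain M a (Suc (Suc n))"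
    using elim_gain_Suc[of "Suc n"] step by simp
  moreover have "(\<Sum>z\<in>{Suc n..Suc M}. elim_gain M a (Suc z) * elim_offset M a b z) =
     elim_gain M a (Suc (Suc n)) * elim_offset M a b (Suc n)
       + (\<Sum>z\<in>{Suc (Suc n)..Suc M}. elim_gain M a (Suc z) * elim_offset M a b z)"
    using step by (intro sum.atLeast_Suc_atMost) simp
  ultimately show ?case using step.IH by (simp add: algebra_simps)
qed

lemma boundary_problem_lower_bound:
  "(\<Prod>w\<in>{1..M}. a w ^ (2 * w)) ^ 2 * (f 0 + 2 * (\<Sum>w\<in>{1..M}. real w * b w)) \<le> f (Suc M)"
proof -
  define G where "G = elim_gain M a 1"
  have G: "0 \<le> G" "G \<le> 1" using elim_gain_bounds G_def by auto
  have "G * (G * (2 * (\<Sum>w\<in>{z..M}. b w))) \<le> elim_gain M a (Suc z) * elim_offset M a b z"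
    if z: "z \<in> {1..Suc M}" for z
  proof -
    have S: "0 \<le> 2 * (\<Sum>w\<in>{z..M}. b w)" using b by (simp add: sum_nonneg)
    have "G * (2 * (\<Sum>w\<in>{z..M}. b w)) \<le> elim_offset M a b z"
      using elim_offset_ge_sum[of z] elim_gain_mono[of 1 z] z S G_def
      by (smt (verit) atLeastAtMost_iff mult_right_mono)
    moreover have "G \<le> elim_gain M a (Suc z)" using elim_gain_mono[of 1 "Suc z"] G_def by simp
    ultimately show ?thesis using G S by (simp add: mult_mono)
  qed
  then have "G ^ 2 * (2 * (\<Sum>z\<in>{1..Suc M}. \<Sum>w\<in>{z..M}. b w))
      \<le> (\<Sum>z\<in>{1..Suc M}. elim_gain M a (Suc z) * elim_offset M a b z)"
    unfolding sum_distrib_left power2_eq_square by (intro sum_mono) (simp add: mult.assoc)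
  moreover have "G ^ 2 * f 0 \<le> G * f 0"
    using G f_nonneg[of 0] by (simp add: power2_eq_square mult_left_le_one_le mult.assoc)
  moreover have "G * f 0 + (\<Sum>z\<in>{1..Suc M}. elim_gain M a (Suc z) * elim_offset M a b z) \<le> f (Suc M)"
    using boundary_problem_elim_chain[of 0] G_def by simp
  moreover have "(\<Prod>k\<in>{1..Suc M}. \<Prod>w\<in>{k..M}. a w ^ 2) ^ 2 \<le> G ^ 2"
    using elim_gain_ge_prod G_def by (intro power_mono) (auto intro!: prod_nonneg)
  moreover have "0 \<le> f 0 + 2 * (\<Sum>z\<in>{1..Suc M}. \<Sum>w\<in>{z..M}. b w)"
    using f_nonneg b by (simp add: sum_nonneg)
  ultimately have "(\<Prod>k\<in>{1..Suc M}. \<Prod>w\<in>{k..M}. a w ^ 2) ^ 2 * (f 0 + 2 * (\<Sum>z\<in>{1..Suc M}. \<Sum>w\<in>{z..M}. b w))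
     \<le> f (Suc M)"
    by (smt (verit, best) distrib_left mult_right_mono)
  then show ?thesis unfolding sum_triangle prod_triangle by (simp add: power_mult)
qed

end

end

end

lemma bounded_harmonic_tail_flat:
  fixes f :: "nat \<Rightarrow> real"
  assumes harmonic: "\<And>k. M < k \<Longrightarrow> f k = (f (Suc k) + f (k - 1)) / 2"
    and lo: "\<And>k. 0 \<le> f k" and hi: "\<And>k. f k \<le> 1"
  shows "f (Suc M) = f M"
proof (rule ccontr)
  assume ne: "f (Suc M) \<noteq> f M"
  define d where "d = f (Suc M) - f M"
  have lin: "f (M + n) = f M + real n * d \<and> f (M + Suc n) = f M + real (Suc n) * d" for n
  proof (induction n)
    case 0
    then show ?case by (simp add: d_def)
  next
    case (Suc n)
    have "f (M + Suc (Suc n)) = 2 * f (M + Suc n) - f (M + n)"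
      using harmonic[of "M + Suc n"] by simp
    then show ?case using Suc by (simp add: algebra_simps)
  qed
  have "0 < \<bar>d\<bar>" using ne d_def by simp
  then obtain n where n: "2 < real n * \<bar>d\<bar>" using reals_Archimedean3 by blast
  have "f (M + n) < 0 \<or> 1 < f (M + n)"
    using lin[of n] lo[of M] hi[of M] n by (cases "d < 0") (auto simp: algebra_simps)
  then show False using lo[of "M + n"] hi[of "M + n"] by linarith
qed

lemma sum_of_nat_indicator_atMost:
  "h \<le> M \<Longrightarrow> (\<Sum>w\<in>{1..M}. if w \<le> h then real w else 0) = real h * (real h + 1) / 2"
proof -
  assume "h \<le> M"
  then have "(\<Sum>w\<in>{1..M}. if w \<le> h then real w else 0) = (\<Sum>w\<in>{1..h}. real w)"
    by (intro sum.mono_neutral_cong_right) auto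
  then show ?thesis using double_gauss_sum_from_Suc_0[of h, where 'a=real] by simp
qed

lemma sum_weighted_card_atLeast:
  fixes A :: "'a set" and \<sigma> :: "'a \<Rightarrow> nat"
  assumes "finite A" "\<And>j. j \<in> A \<Longrightarrow> \<sigma> j \<le> M"
  shows "(\<Sum>w\<in>{1..M}. real w * real (card {j\<in>A. w \<le> \<sigma> j}))
           = (\<Sum>j\<in>A. real (\<sigma> j) * (real (\<sigma> j) + 1)) / 2"
proof -
  have "(\<Sum>w\<in>{1..M}. real w * real (card {j\<in>A. w \<le> \<sigma> j}))
      = (\<Sum>w\<in>{1..M}. \<Sum>j\<in>A. if w \<le> \<sigma> j then real w else 0)"
    using assms(1) by (simp add: sum.If_cases Int_def conj_commute mult.commute)
  also have "\<dots> = (\<Sum>j\<in>A. \<Sum>w\<in>{1..M}. if w \<le> \<sigma> j then real w else 0)"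
    by (rule sum.swap)
  also have "\<dots> = (\<Sum>j\<in>A. real (\<sigma> j) * (real (\<sigma> j) + 1) / 2)"
    using assms(2) by (intro sum.cong refl sum_of_nat_indicator_atMost)
  finally show ?thesis by (simp add: sum_divide_distrib)
qed

lemma card_atLeast_le_sum:
  fixes A :: "'a set" and \<sigma> :: "'a \<Rightarrow> nat"
  assumes "finite A" "1 \<le> k"
  shows "card {j\<in>A. k \<le> \<sigma> j} \<le> (\<Sum>j\<in>A. \<sigma> j)"
proof -
  have "card {j\<in>A. k \<le> \<sigma> j} = (\<Sum>j\<in>{j\<in>A. k \<le> \<sigma> j}. 1)" by simp
  also have "\<dots> \<le> (\<Sum>j\<in>{j\<in>A. k \<le> \<sigma> j}. \<sigma> j)" using assms(2) by (intro sum_mono) auto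
  also have "\<dots> \<le> (\<Sum>j\<in>A. \<sigma> j)" using assms(1) by (intro sum_mono2) auto
  finally show ?thesis .
qed

lemma exp_le_one_minus_squared:
  fixes p q :: real
  assumes "0 \<le> p" "p \<le> q" "q < 1 / 2"
  shows "exp (- (2 * (1 + 2 * q) * p)) \<le> (1 - p) ^ 2"
proof -
  have "- p - 2 * p\<^sup>2 \<le> ln (1 - p)"
    using assms by (intro ln_one_minus_pos_lower_bound) auto
  moreover have "p + 2 * p\<^sup>2 \<le> (1 + 2 * q) * p"
    using assms mult_left_mono[of p q p] by (simp add: power2_eq_square algebra_simps)
  ultimately have "exp (- ((1 + 2 * q) * p)) \<le> exp (ln (1 - p))" by simp
  then have "exp (- ((1 + 2 * q) * p)) \<le> 1 - p" using assms by simp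
  then have "exp (- ((1 + 2 * q) * p)) ^ 2 \<le> (1 - p) ^ 2" by (intro power_mono) auto
  then show ?thesis by (simp add: power2_eq_square exp_add[symmetric] algebra_simps)
qed

lemma exp_le_prod_one_minus_power:
  fixes p :: "nat \<Rightarrow> real" and q :: real
  assumes p: "\<And>w. w \<in> {1..M} \<Longrightarrow> 0 \<le> p w \<and> p w \<le> q" and q: "q < 1 / 2"
  shows "exp (- ((1 + 2 * q) * (2 * (\<Sum>w\<in>{1..M}. real w * p w)))) \<le> (\<Prod>w\<in>{1..M}. (1 - p w) ^ (2 * w))"
proof -
  have "- ((1 + 2 * q) * (2 * (\<Sum>w\<in>{1..M}. real w * p w))) = (\<Sum>w\<in>{1..M}. real w * - (2 * (1 + 2 * q) * p w))"
    by (simp add: sum_distrib_left sum_negf ac_simps)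
  then have "exp (- ((1 + 2 * q) * (2 * (\<Sum>w\<in>{1..M}. real w * p w)))) = (\<Prod>w\<in>{1..M}. exp (- (2 * (1 + 2 * q) * p w)) ^ w)"
    by (simp only: exp_sum[OF finite_atLeastAtMost] exp_of_nat_mult)
  also have "\<dots> \<le> (\<Prod>w\<in>{1..M}. (1 - p w) ^ (2 * w))"
  proof (rule prod_mono)
    fix w assume "w \<in> {1..M}"
    then have "exp (- (2 * (1 + 2 * q) * p w)) \<le> (1 - p w) ^ 2"
      using exp_le_one_minus_squared p q by blast
    then show "0 \<le> exp (- (2 * (1 + 2 * q) * p w)) ^ w \<and> exp (- (2 * (1 + 2 * q) * p w)) ^ w \<le> (1 - p w) ^ (2 * w)"
      by (simp add: power_mult power_mono)
  qed
  finally show ?thesis .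
qed
lemma measure_stream_space_first_step:
  fixes A :: "'a set" and E :: "('a \<times> int) stream set"
  defines "P \<equiv> stream_space (measure_pmf (pair_pmf (pmf_of_set A) (pmf_of_set {-1, 1::int})))"
  assumes A: "finite A" "A \<noteq> {}" and E: "E \<in> sets P"
  shows "measure P E =
    (\<Sum>x\<in>A. (measure P {\<omega>. (x, -1) ## \<omega> \<in> E} + measure P {\<omega>. (x, 1) ## \<omega> \<in> E}) / 2) / card A"
proof -
  define p where "p = pair_pmf (pmf_of_set A) (pmf_of_set {-1, 1::int})"
  have space: "space P = UNIV" by (simp add: P_def space_stream_space)
  define g where "g t = measure P {\<omega>. t ## \<omega> \<in> E}" for t
  have g: "0 \<le> g t" for t by (simp add: g_def)
  have "ennreal (measure P E) = (\<integral>\<^sup>+t. ennreal (g t) \<partial>measure_pmf p)"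
    using prob_space.prob_stream_space[OF prob_space_measure_pmf, of p "\<lambda>\<omega>. \<omega> \<in> E"] E space
    by (simp add: P_def p_def g_def)
  also have "\<dots> = (\<integral>\<^sup>+x. \<integral>\<^sup>+s. ennreal (g (x, s)) \<partial>measure_pmf (pmf_of_set {-1, 1}) \<partial>measure_pmf (pmf_of_set A))"
    unfolding p_def by (rule nn_integral_pair_pmf')
  also have "\<dots> = ennreal ((\<Sum>x\<in>A. (g (x, -1) + g (x, 1)) / 2) / card A)"
  proof -
    have half: "(ennreal (g (x, -1)) + ennreal (g (x, 1))) / 2 = ennreal ((g (x, -1) + g (x, 1)) / 2)" for x
      using g divide_ennreal[of "g (x, -1) + g (x, 1)" 2] by (simp add: ennreal_plus add_nonneg_nonneg)
    have "(\<Sum>x\<in>A. ennreal ((g (x, -1) + g (x, 1)) / 2)) = ennreal (\<Sum>x\<in>A. (g (x, -1) + g (x, 1)) / 2)"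
      using g by (intro sum_ennreal) (simp add: add_nonneg_nonneg)
    moreover have "ennreal (\<Sum>x\<in>A. (g (x, -1) + g (x, 1)) / 2) / ennreal (real (card A))
        = ennreal ((\<Sum>x\<in>A. (g (x, -1) + g (x, 1)) / 2) / card A)"
      using A g by (intro divide_ennreal) (auto simp: card_gt_0_iff intro!: sum_nonneg add_nonneg_nonneg)
    ultimately show ?thesis
      by (simp add: nn_integral_pmf_of_set half ennreal_of_nat_eq_real_of_nat A del: sum_ennreal)
  qed
  finally show ?thesis
    using g by (simp add: g_def sum_nonneg add_nonneg_nonneg divide_nonneg_nonneg ennreal_inj)
qed

definition hit_event :: "(nat \<Rightarrow> nat) \<Rightarrow> nat \<Rightarrow> int \<Rightarrow> (nat \<times> int) stream set" where
  "hit_event \<sigma> i z = {\<omega>. \<exists>n.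
     (\<forall>m<n. z + (\<Sum>k<m. snd (\<omega> !! k)) > int (\<sigma> (fst (\<omega> !! m)))) \<and>
     z + (\<Sum>k<n. snd (\<omega> !! k)) \<le> int (\<sigma> (fst (\<omega> !! n))) \<and> fst (\<omega> !! n) = i}"

definition hit_prob :: "nat \<Rightarrow> (nat \<Rightarrow> nat) \<Rightarrow> nat \<Rightarrow> int \<Rightarrow> real" where
  "hit_prob N \<sigma> i z = measure (explorer_space N) (hit_event \<sigma> i z)"

lemma space_explorer_space: "space (explorer_space N) = UNIV"
  by (simp add: explorer_space_def space_stream_space)

lemma attach_prob_eq_hit_prob:
  "attach_prob N \<sigma> i = hit_prob N \<sigma> i (int (Max (\<sigma> ` {1..N})) + 1)"
  unfolding attach_prob_def hit_prob_def attach_event_def hit_event_def explorer_Z_def explorer_X_def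
  by (simp add: space_explorer_space)

lemma Cons_in_hit_event_iff:
  "x ## \<omega> \<in> hit_event \<sigma> i z \<longleftrightarrow>
     (z \<le> int (\<sigma> (fst x)) \<and> fst x = i) \<or> (int (\<sigma> (fst x)) < z \<and> \<omega> \<in> hit_event \<sigma> i (z + snd x))"
proof -
  define Q where "Q \<omega> z n \<longleftrightarrow> (\<forall>m<n. z + (\<Sum>k<m. snd (\<omega> !! k)) > int (\<sigma> (fst (\<omega> !! m)))) \<and>
     z + (\<Sum>k<n. snd (\<omega> !! k)) \<le> int (\<sigma> (fst (\<omega> !! n))) \<and> fst (\<omega> !! n) = i"
    for \<omega> :: "(nat \<times> int) stream" and z n
  have hit: "\<omega> \<in> hit_event \<sigma> i z \<longleftrightarrow> (\<exists>n. Q \<omega> z n)" for \<omega> z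
    unfolding hit_event_def Q_def by simp
  have ex_nat: "(\<exists>n. P n) \<longleftrightarrow> P 0 \<or> (\<exists>n. P (Suc n))" for P :: "nat \<Rightarrow> bool"
    by (metis not0_implies_Suc)
  have shift: "(\<Sum>k<Suc m. snd ((x ## \<omega>) !! k)) = snd x + (\<Sum>k<m. snd (\<omega> !! k))" for m
    unfolding sum.lessThan_Suc_shift by simp
  have "Q (x ## \<omega>) z 0 \<longleftrightarrow> z \<le> int (\<sigma> (fst x)) \<and> fst x = i"
    unfolding Q_def by simp
  moreover have "Q (x ## \<omega>) z (Suc n) \<longleftrightarrow> int (\<sigma> (fst x)) < z \<and> Q \<omega> (z + snd x) n" for n
    unfolding Q_def All_less_Suc2 by (simp add: shift add.assoc del: sum.lessThan_Suc)
  ultimately show ?thesis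
    unfolding hit ex_nat[of "Q (x ## \<omega>) z"] by simp
qed

lemma hit_event_sets: "hit_event \<sigma> i z \<in> sets (explorer_space N)"
proof -
  define Q where "Q n xs \<longleftrightarrow> (\<forall>m<n. z + (\<Sum>k<m. snd (xs ! k)) > int (\<sigma> (fst (xs ! m)))) \<and>
     z + (\<Sum>k<n. snd (xs ! k)) \<le> int (\<sigma> (fst (xs ! n))) \<and> fst (xs ! n) = i"
    for n and xs :: "(nat \<times> int) list"
  have eq: "hit_event \<sigma> i z = {\<omega> \<in> space (explorer_space N). \<exists>n. Q n (stake (Suc n) \<omega>)}"
    unfolding hit_event_def Q_def space_explorer_space by (simp del: stake.simps add: stake_nth)
  have "sets (explorer_space N) = sets (stream_space (count_space UNIV))"
    unfolding explorer_space_def by (intro sets_stream_space_cong) simp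
  then have stake: "stake n \<in> measurable (explorer_space N) (count_space UNIV)" for n
    using measurable_stake[of n] by (simp add: measurable_cong_sets)
  have [measurable]: "Measurable.pred (explorer_space N) (\<lambda>\<omega>. Q n (stake (Suc n) \<omega>))" for n
    using measurable_compose[OF stake[of "Suc n"], of "Q n" "count_space UNIV"] by simp
  show ?thesis unfolding eq by measurable
qed

lemma prob_space_explorer_space: "prob_space (explorer_space N)"
  unfolding explorer_space_def by (rule prob_space.prob_space_stream_space[OF prob_space_measure_pmf])

lemma hit_prob_bounds: "0 \<le> hit_prob N \<sigma> i z \<and> hit_prob N \<sigma> i z \<le> 1"
  unfolding hit_prob_def using prob_space.prob_le_1[OF prob_space_explorer_space] by simp

lemma hit_prob_recurrence:
  assumes N: "0 < N" and i: "i \<in> {1..N}"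
  shows "hit_prob N \<sigma> i z = (if z \<le> int (\<sigma> i) then 1 / N else 0)
     + real (card {j\<in>{1..N}. int (\<sigma> j) < z}) / N * (hit_prob N \<sigma> i (z + 1) + hit_prob N \<sigma> i (z - 1)) / 2"
proof -
  define c where "c = (hit_prob N \<sigma> i (z + 1) + hit_prob N \<sigma> i (z - 1)) / 2"
  have step: "measure (explorer_space N) {\<omega>. (x, s) ## \<omega> \<in> hit_event \<sigma> i z}
      = (if z \<le> int (\<sigma> x) then (if x = i then 1 else 0) else hit_prob N \<sigma> i (z + s))" for x s
    using prob_space.prob_space[OF prob_space_explorer_space]
    by (simp add: Cons_in_hit_event_iff hit_prob_def space_explorer_space not_le)
  have "hit_prob N \<sigma> i z = (\<Sum>x\<in>{1..N}. (measure (explorer_space N) {\<omega>. (x, -1) ## \<omega> \<in> hit_event \<sigma> i z}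
      + measure (explorer_space N) {\<omega>. (x, 1) ## \<omega> \<in> hit_event \<sigma> i z}) / 2) / N"
    using measure_stream_space_first_step[of "{1..N}" "hit_event \<sigma> i z"] N hit_event_sets[of \<sigma> i z N]
    unfolding hit_prob_def explorer_space_def by simp
  also have "(\<Sum>x\<in>{1..N}. (measure (explorer_space N) {\<omega>. (x, -1) ## \<omega> \<in> hit_event \<sigma> i z}
      + measure (explorer_space N) {\<omega>. (x, 1) ## \<omega> \<in> hit_event \<sigma> i z}) / 2)
      = (\<Sum>x\<in>{1..N}. if z \<le> int (\<sigma> x) then (if x = i then 1 else 0) else c)"
    by (intro sum.cong refl) (simp add: step c_def)
  also have "(\<Sum>x\<in>{1..N}. if z \<le> int (\<sigma> x) then (if x = i then 1 else 0) else c)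
      = (\<Sum>x\<in>{1..N} \<inter> {x. z \<le> int (\<sigma> x)}. if x = i then 1 else 0) + (\<Sum>x\<in>{1..N} \<inter> - {x. z \<le> int (\<sigma> x)}. c)"
    by (rule sum.If_cases) simp
  also have "{1..N} \<inter> - {x. z \<le> int (\<sigma> x)} = {j\<in>{1..N}. int (\<sigma> j) < z}" by auto
  finally have "hit_prob N \<sigma> i z
      = ((if z \<le> int (\<sigma> i) then 1 else 0) + real (card {j\<in>{1..N}. int (\<sigma> j) < z}) * c) / N"
    using i by (simp add: sum.delta Int_def conj_commute)
  then show ?thesis using N by (simp add: c_def field_simps)
qed

lemma hit_prob_nat_recurrence:
  assumes N: "0 < N" and i: "i \<in> {1..N}" and k: "1 \<le> k"
  shows "hit_prob N \<sigma> i (int k) = (if k \<le> \<sigma> i then 1 / N else 0)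
     + (1 - real (card {j\<in>{1..N}. k \<le> \<sigma> j}) / N)
       * (hit_prob N \<sigma> i (int (Suc k)) + hit_prob N \<sigma> i (int (k - 1))) / 2"
proof -
  have "card ({j\<in>{1..N}. int (\<sigma> j) < int k} \<union> {j\<in>{1..N}. k \<le> \<sigma> j})
      = card {j\<in>{1..N}. int (\<sigma> j) < int k} + card {j\<in>{1..N}. k \<le> \<sigma> j}"
    by (rule card_Un_disjoint) auto
  moreover have "{j\<in>{1..N}. int (\<sigma> j) < int k} \<union> {j\<in>{1..N}. k \<le> \<sigma> j} = {1..N}" by auto
  ultimately have "card {j\<in>{1..N}. int (\<sigma> j) < int k} + card {j\<in>{1..N}. k \<le> \<sigma> j} = N" by simp
  then have below: "real (card {j\<in>{1..N}. int (\<sigma> j) < int k}) / N = 1 - real (card {j\<in>{1..N}. k \<le> \<sigma> j}) / N"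
    using N by (simp add: field_simps flip: of_nat_add)
  have "hit_prob N \<sigma> i (int k) = (if k \<le> \<sigma> i then 1 / N else 0)
     + real (card {j\<in>{1..N}. int (\<sigma> j) < int k}) / N
       * (hit_prob N \<sigma> i (int (Suc k)) + hit_prob N \<sigma> i (int (k - 1))) / 2"
    using hit_prob_recurrence[OF N i, of \<sigma> "int k"] k by (simp add: of_nat_diff ac_simps)
  then show ?thesis unfolding below .
qed

lemma attach_prob_ge_weight_product:
  fixes N :: nat and \<sigma> :: "nat \<Rightarrow> nat" and i :: nat
  defines "M \<equiv> Max (\<sigma> ` {1..N})"
    and "p \<equiv> \<lambda>w. real (card {j\<in>{1..N}. w \<le> \<sigma> j}) / real N"
  assumes N: "0 < N" and i: "i \<in> {1..N}" and p_lt_1: "\<And>w. 1 \<le> w \<Longrightarrow> p w < 1"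
  shows "(\<Prod>w\<in>{1..M}. (1 - p w) ^ (2 * w)) ^ 2 * ((real (\<sigma> i) ^ 2 + real (\<sigma> i) + 1) / N)
    \<le> attach_prob N \<sigma> i"
proof -
  \<comment> \<open>\<open>a 0\<close> never enters the bound; the value 1 only serves the positivity hypothesis.\<close>
  define a where "a w = (if w = 0 then 1 else 1 - p w)" for w
  define b where "b w = (if w \<le> \<sigma> i then 1 / real N else 0)" for w
  define f where "f k = hit_prob N \<sigma> i (int k)" for k
  have M_ge: "\<sigma> j \<le> M" if "j \<in> {1..N}" for j using that by (simp add: M_def)
  have a: "0 < a w \<and> a w \<le> 1" for w using p_lt_1[of w] by (simp add: a_def p_def)
  have f_rec: "f k = b k + a k * (f (Suc k) + f (k - 1)) / 2" if "1 \<le> k" for k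
    using hit_prob_nat_recurrence[OF N i that] that by (simp add: f_def a_def b_def p_def)
  have f_top: "f (Suc M) = f M"
  proof (rule bounded_harmonic_tail_flat)
    fix k assume k: "M < k"
    have "\<sigma> j < k" if "j \<in> {1..N}" for j using M_ge[OF that] k by simp
    then have "p k = 0" "b k = 0" using i by (force simp: p_def, force simp: b_def)
    then show "f k = (f (Suc k) + f (k - 1)) / 2" using f_rec[of k] k by (simp add: a_def)
  qed (use hit_prob_bounds in \<open>auto simp: f_def\<close>)
  have bound: "(\<Prod>w\<in>{1..M}. a w ^ (2 * w)) ^ 2 * (f 0 + 2 * (\<Sum>w\<in>{1..M}. real w * b w)) \<le> f (Suc M)"
    using a f_top f_rec hit_prob_bounds by (intro boundary_problem_lower_bound) (auto simp: b_def f_def)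
  have "(\<Sum>w\<in>{1..M}. real w * b w) = (\<Sum>w\<in>{1..M}. if w \<le> \<sigma> i then real w else 0) / real N"
    unfolding sum_divide_distrib by (intro sum.cong refl) (simp add: b_def)
  moreover have "f 0 = 1 / real N"
    using hit_prob_recurrence[OF N i, of \<sigma> 0] by (simp add: f_def)
  ultimately have V: "f 0 + 2 * (\<Sum>w\<in>{1..M}. real w * b w) = (real (\<sigma> i) ^ 2 + real (\<sigma> i) + 1) / N"
    using sum_of_nat_indicator_atMost[OF M_ge[OF i]] N by (simp add: field_simps power2_eq_square)
  have "(\<Prod>w\<in>{1..M}. a w ^ (2 * w)) = (\<Prod>w\<in>{1..M}. (1 - p w) ^ (2 * w))"
    by (intro prod.cong refl) (simp add: a_def)
  moreover have "f (Suc M) = attach_prob N \<sigma> i"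
    unfolding attach_prob_eq_hit_prob f_def M_def by (simp add: add.commute)
  ultimately show ?thesis using bound unfolding V by simp
qed

lemma attach_prob_lower_bound:
  fixes N :: nat and \<sigma> :: "nat \<Rightarrow> nat" and i :: nat
  assumes N: "2 \<le> N" and i: "i \<in> {1..N}" and small: "real (\<Sum>j=1..N. \<sigma> j) < real N / 2"
  shows "(real (\<sigma> i) ^ 2 + 1) / real N *
      exp (- (3 / real N) * (\<Sum>j=1..N. real (\<sigma> j) * (real (\<sigma> j) + 1))
        * (1 + 2 * real (\<Sum>j=1..N. \<sigma> j) / real N)) \<le> attach_prob N \<sigma> i"
proof -
  define S2 where "S2 = (\<Sum>j=1..N. real (\<sigma> j) * (real (\<sigma> j) + 1))"
  define q where "q = real (\<Sum>j=1..N. \<sigma> j) / real N"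
  define M where "M = Max (\<sigma> ` {1..N})"
  define p where "p = (\<lambda>w. real (card {j\<in>{1..N}. w \<le> \<sigma> j}) / real N)"
  define P where "P = (\<Prod>w\<in>{1..M}. (1 - p w) ^ (2 * w))"
  define X where "X = (1 + 2 * q) * (S2 / real N)"
  have Npos: "0 < real N" using N by simp
  have q: "0 \<le> q" "q < 1 / 2" using small Npos by (simp_all add: q_def sum_nonneg field_simps)
  have p: "0 \<le> p w \<and> p w \<le> q" if "1 \<le> w" for w
  proof -
    have "real (card {j\<in>{1..N}. w \<le> \<sigma> j}) \<le> real (\<Sum>j=1..N. \<sigma> j)"
      using card_atLeast_le_sum[of "{1..N}" w \<sigma>] that by (intro of_nat_mono) simp
    then show ?thesis by (simp add: p_def q_def divide_right_mono)
  qed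
  have "2 * (\<Sum>w\<in>{1..M}. real w * p w) = S2 / real N"
    using sum_weighted_card_atLeast[of "{1..N}" \<sigma> M]
    by (simp add: M_def p_def S2_def sum_divide_distrib[symmetric] mult.assoc)
  then have "exp (- X) \<le> P"
    using exp_le_prod_one_minus_power[of M p q] p q unfolding X_def P_def by simp
  then have "exp (- X) ^ 2 \<le> P ^ 2" by (intro power_mono) simp_all
  moreover have "exp (- (3 / real N) * S2 * (1 + 2 * q)) \<le> exp (- X) ^ 2"
  proof -
    have "0 \<le> X" using q Npos by (simp add: X_def S2_def sum_nonneg)
    moreover have "- (3 / real N) * S2 * (1 + 2 * q) = - 3 * X"
      using Npos by (simp add: X_def field_simps)
    ultimately show ?thesis by (simp add: exp_of_nat_mult[of 2, symmetric])
  qed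
  ultimately have "(real (\<sigma> i) ^ 2 + 1) / real N * exp (- (3 / real N) * S2 * (1 + 2 * q))
      \<le> (real (\<sigma> i) ^ 2 + real (\<sigma> i) + 1) / real N * P ^ 2"
    by (intro mult_mono) (simp_all add: divide_right_mono)
  also have "\<dots> \<le> attach_prob N \<sigma> i"
  proof -
    have "p w < 1" if "1 \<le> w" for w using p[OF that] q by simp
    then have "P ^ 2 * ((real (\<sigma> i) ^ 2 + real (\<sigma> i) + 1) / N) \<le> attach_prob N \<sigma> i"
      unfolding P_def M_def p_def by (intro attach_prob_ge_weight_product) (use N i in auto)
    then show ?thesis by (simp add: mult.commute)
  qed
  finally show ?thesis by (simp add: S2_def q_def)
qed

theorem lemma2p2:
  shows "\<exists>\<kappa>D C :: real. \<kappa>D > 0 \<and> C > 0 \<and>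
    (\<forall>N::nat. \<forall>\<sigma>::nat \<Rightarrow> nat. \<forall>i. N \<ge> 2 \<longrightarrow> i \<in> {1..N} \<longrightarrow>
       real (\<Sum>j=1..N. \<sigma> j) < real N / 2 \<longrightarrow>
       attach_prob N \<sigma> i \<ge>
         \<kappa>D * (real (\<sigma> i) ^ 2 + 1) / real N *
         exp (- (3 / real N) * (\<Sum>j=1..N. real (\<sigma> j) * (real (\<sigma> j) + 1))
                * (1 + C * real (\<Sum>j=1..N. \<sigma> j) / real N)))"
  using attach_prob_lower_bound by (intro exI[of _ 1] exI[of _ 2]) simp

end
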